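(* Let $x\in\mathbb{R}_+^n$ and let $\mathrm{IC}(\mathbf{a}_0,\dots,\mathbf{a}_{n-1})$ be an interval circulant matrix. Then $x\in\mathrm{Attr}(A)$ for all $A\in\mathrm{IC}(\mathbf{a}_0,\dots,\mathbf{a}_{n-1})$ if and only if $x\in\mathrm{Attr}(A^{(k)})$ for each $k\in\{0,\dots,n-1\}$.
   Context: Max algebra on $\mathbb{R}_+$: $\oplus=\max$, ordinary product; $\lambda(A)$ greatest max-algebraic eigenvalue (maximum cycle geometric mean); $\mathrm{Attr}(A)=\{x\in\mathbb{R}_+^n: A^{t+1}\otimes x=\lambda(A)A^t\otimes x\text{ for some }t\ge0\}$. $\mathrm{Circ}(a_0,\dots,a_{n-1})$ has entries $A_{i,j}=a_t$, $t\equiv j-i\pmod n$; $\mathrm{IC}(\mathbf{a}_0,\dots,\mathbf{a}_{n-1})$ is the set of all $\mathrm{Circ}(a_0,\dots,a_{n-1})$ with $a_t\in\mathbf{a}_t$, each $\mathbf{a}_t\subseteq\mathbb{R}_+$ a nonempty interval of one of the forms $[\underline{a}_t,\overline{a}_t]$, $(\underline{a}_t,\overline{a}_t)$, $(\underline{a}_t,\overline{a}_t]$, $[\underline{a}_t,\overline{a}_t)$. $A^{(k)}=\mathrm{Circ}(\underline{a}_0,\dots,\underline{a}_{k-1},\overline{a}_k,\underline{a}_{k+1},\dots,\underline{a}_{n-1})$. *)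

theory Defs
  imports Complex_Main
begin

text \<open>Square n x n matrices over the nonnegative reals are represented as
  functions nat => nat => real, only entries with indices < n being relevant;
  vectors as nat => real, only components < n being relevant.\<close>

definition mp_mult :: "nat \<Rightarrow> (nat \<Rightarrow> nat \<Rightarrow> real) \<Rightarrow> (nat \<Rightarrow> nat \<Rightarrow> real) \<Rightarrow> (nat \<Rightarrow> nat \<Rightarrow> real)" where
  "mp_mult n A B = (\<lambda>i j. Max ((\<lambda>l. A i l * B l j) ` {..<n}))"

definition mp_id :: "nat \<Rightarrow> nat \<Rightarrow> real" where
  "mp_id = (\<lambda>i j. if i = j then 1 else 0)"

primrec mp_pow :: "nat \<Rightarrow> (nat \<Rightarrow> nat \<Rightarrow> real) \<Rightarrow> nat \<Rightarrow> (nat \<Rightarrow> nat \<Rightarrow> real)" where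
  "mp_pow n A 0 = mp_id"
| "mp_pow n A (Suc t) = mp_mult n A (mp_pow n A t)"

definition mp_vec :: "nat \<Rightarrow> (nat \<Rightarrow> nat \<Rightarrow> real) \<Rightarrow> (nat \<Rightarrow> real) \<Rightarrow> (nat \<Rightarrow> real)" where
  "mp_vec n A x = (\<lambda>i. Max ((\<lambda>j. A i j * x j) ` {..<n}))"

definition mp_lambda :: "nat \<Rightarrow> (nat \<Rightarrow> nat \<Rightarrow> real) \<Rightarrow> real" where
  "mp_lambda n A = Max {root k (\<Prod>j<k. A (\<sigma> j) (\<sigma> ((j + 1) mod k))) | k \<sigma>.
       1 \<le> k \<and> k \<le> n \<and> (\<forall>j<k. \<sigma> j < n) \<and> (\<forall>j\<ge>k. \<sigma> j = 0)}"

definition nonneg_vec :: "nat \<Rightarrow> (nat \<Rightarrow> real) \<Rightarrow> bool" where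
  "nonneg_vec n x \<longleftrightarrow> (\<forall>j<n. 0 \<le> x j)"

definition Attr :: "nat \<Rightarrow> (nat \<Rightarrow> nat \<Rightarrow> real) \<Rightarrow> (nat \<Rightarrow> real) set" where
  "Attr n A = {x. nonneg_vec n x \<and>
     (\<exists>t. \<forall>i<n. mp_vec n (mp_pow n A (Suc t)) x i = mp_lambda n A * mp_vec n (mp_pow n A t) x i)}"

definition Circ :: "nat \<Rightarrow> (nat \<Rightarrow> real) \<Rightarrow> (nat \<Rightarrow> nat \<Rightarrow> real)" where
  "Circ n a = (\<lambda>i j. a ((j + n - i) mod n))"

definition is_interval_lh :: "real \<Rightarrow> real \<Rightarrow> real set \<Rightarrow> bool" where
  "is_interval_lh lo hi S \<longleftrightarrow> 0 \<le> lo \<and> S \<noteq> {} \<and>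
     (S = {lo..hi} \<or> S = {lo<..<hi} \<or> S = {lo<..hi} \<or> S = {lo..<hi})"

definition IC :: "nat \<Rightarrow> (nat \<Rightarrow> real set) \<Rightarrow> (nat \<Rightarrow> nat \<Rightarrow> real) set" where
  "IC n I = {Circ n a | a. \<forall>t<n. a t \<in> I t}"

definition Ak :: "nat \<Rightarrow> (nat \<Rightarrow> real) \<Rightarrow> (nat \<Rightarrow> real) \<Rightarrow> nat \<Rightarrow> (nat \<Rightarrow> nat \<Rightarrow> real)" where
  "Ak n lo hi k = Circ n (\<lambda>t. if t = k then hi t else lo t)"

end

theory Submission
  imports Defs "HOL-Analysis.Elementary_Topology"
begin

text \<open>For a circulant \<open>A = Circ n a\<close> one has \<open>(A \<otimes> y)\<^sub>i = max\<^sub>e a\<^sub>e y\<^sub>i\<^sub>+\<^sub>e\<close> and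
  \<open>\<lambda>(A) = max\<^sub>t a\<^sub>t = a\<^sub>s\<close>. Dividing by \<open>a\<^sub>s\<close> and rotating the coefficients by \<open>s\<close> gives
  coefficients \<open>b\<close> with \<open>b\<^sub>0 = 1\<close> and \<open>b \<le> 1\<close>, and \<open>A\<^sup>t x\<close> is \<open>a\<^sub>s\<^sup>t\<close> times \<open>b\<^sup>t x\<close> rotated
  by \<open>t s\<close>. The vectors \<open>b\<^sup>t x\<close> increase with \<open>t\<close> and, since cutting a cycle (of weight at
  most 1) out of a walk does not decrease its weight, are constant from \<open>t = n - 1\<close> on, where
  they equal the Kleene star \<open>F = b\<^sup>* \<otimes> x\<close>. Hence \<open>x \<in> Attr(A)\<close> iff \<open>F\<close> is invariant under
  rotation by \<open>s\<close>. This condition passes to larger normalized coefficients and to limits. If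
  \<open>s\<close> maximizes the coefficients of a member \<open>A\<close> of the interval family, the normalized
  coefficients of the vertex matrix \<open>Ak n lo hi s\<close> lie below those of \<open>A\<close>; conversely every
  vertex matrix is a limit of members of the family.\<close>

section \<open>Maxima over finite sets\<close>

lemma ex_argmax_lessThan:
  fixes f :: "nat \<Rightarrow> 'a::linorder"
  assumes "0 < n"
  obtains s where "s < n" "\<forall>t<n. f t \<le> f s"
proof -
  have "Max (f ` {..<n}) \<in> f ` {..<n}" using assms by (intro Max_in) auto
  then obtain s where "s < n" "f s = Max (f ` {..<n})" by auto
  then show ?thesis by (intro that) auto
qed

lemma Max_image_swap:
  fixes g :: "'a \<Rightarrow> 'b \<Rightarrow> 'c::linorder"
  assumes "finite A" "A \<noteq> {}" "finite B" "B \<noteq> {}"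
  shows "Max ((\<lambda>a. Max (g a ` B)) ` A) = Max ((\<lambda>b. Max ((\<lambda>a. g a b) ` A)) ` B)"
proof -
  have "Max ((\<lambda>a. Max (g a ` B)) ` A) \<le> z \<longleftrightarrow> (\<forall>a\<in>A. \<forall>b\<in>B. g a b \<le> z)"
    and "Max ((\<lambda>b. Max ((\<lambda>a. g a b) ` A)) ` B) \<le> z \<longleftrightarrow> (\<forall>a\<in>A. \<forall>b\<in>B. g a b \<le> z)" for z
    using assms by auto
  then show ?thesis by (meson order.antisym order.refl)
qed

lemma mult_Max_image:
  fixes c :: "'b::linordered_semiring"
  assumes "0 \<le> c" "finite A" "A \<noteq> {}"
  shows "c * Max (f ` A) = Max ((\<lambda>x. c * f x) ` A)"
proof -
  have "mono ((*) c)" using assms(1) by (simp add: mono_def mult_left_mono)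
  then show ?thesis using mono_Max_commute[of "(*) c" "f ` A"] assms by (simp add: image_image)
qed

lemma tendsto_Max_image:
  fixes f :: "'i \<Rightarrow> 'a \<Rightarrow> 'b::linorder_topology"
  assumes "finite A" "A \<noteq> {}" "\<And>e. e \<in> A \<Longrightarrow> ((\<lambda>j. f j e) \<longlongrightarrow> g e) F"
  shows "((\<lambda>j. Max (f j ` A)) \<longlongrightarrow> Max (g ` A)) F"
  using assms
proof (induction A rule: finite_ne_induct)
  case (singleton e)
  then show ?case by simp
next
  case (insert e A)
  then show ?case by (simp add: tendsto_max)
qed

lemma tendsto_le_frequently:
  fixes f g :: "'i \<Rightarrow> real"
  assumes "(f \<longlongrightarrow> l) F" "(g \<longlongrightarrow> m) F" "\<exists>\<^sub>F j in F. f j \<le> g j"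
  shows "l \<le> m"
proof (rule ccontr)
  assume "\<not> l \<le> m"
  then have "\<forall>\<^sub>F j in F. 0 < f j - g j"
    using order_tendstoD(1)[OF tendsto_diff[OF assms(1,2)], of 0] by simp
  then show False using assms(3) by (simp add: frequently_def) (metis (mono_tags, lifting) eventually_mono not_le)
qed

lemma frequently_argmax_tendsto:
  fixes a :: "nat \<Rightarrow> nat \<Rightarrow> real"
  assumes "0 < n" "\<forall>t<n. (\<lambda>j. a j t) \<longlonglongrightarrow> c t"
  obtains s where "s < n" "\<exists>\<^sub>F j in sequentially. \<forall>t<n. a j t \<le> a j s" "\<forall>t<n. c t \<le> c s"
proof -
  have "\<exists>s<n. \<exists>\<^sub>F j in sequentially. \<forall>t<n. a j t \<le> a j s"
  proof (rule ccontr)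
    assume "\<not> ?thesis"
    then have "\<forall>\<^sub>F j in sequentially. \<forall>s\<in>{..<n}. \<not> (\<forall>t<n. a j t \<le> a j s)"
      by (intro eventually_ball_finite) (auto simp: not_frequently)
    then obtain j where "\<forall>s<n. \<not> (\<forall>t<n. a j t \<le> a j s)"
      unfolding eventually_sequentially by blast
    then show False using ex_argmax_lessThan[OF assms(1), of "a j"] by blast
  qed
  then obtain s where s: "s < n" and max_s: "\<exists>\<^sub>F j in sequentially. \<forall>t<n. a j t \<le> a j s" by blast
  have "c t \<le> c s" if t: "t < n" for t
  proof -
    have "\<exists>\<^sub>F j in sequentially. a j t \<le> a j s" using max_s t by (auto elim: frequently_elim1)
    then show ?thesis
      by (rule tendsto_le_frequently[OF assms(2)[rule_format, OF t] assms(2)[rule_format, OF s]])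
  qed
  then show ?thesis using that s max_s by blast
qed

section \<open>Max-plus matrix-vector products\<close>

lemma mp_vec_mp_mult:
  assumes "0 < n" "\<forall>i j. 0 \<le> A i j" "\<forall>j<n. 0 \<le> y j"
  shows "mp_vec n (mp_mult n A B) y i = mp_vec n A (mp_vec n B y) i"
proof -
  have ne: "{..<n} \<noteq> {}" using assms(1) by auto
  have "mp_vec n A (mp_vec n B y) i = Max ((\<lambda>l. Max ((\<lambda>j. A i l * (B l j * y j)) ` {..<n})) ` {..<n})"
    unfolding mp_vec_def using assms(2) by (simp add: mult_Max_image[OF _ _ ne] image_image)
  also have "\<dots> = Max ((\<lambda>j. Max ((\<lambda>l. A i l * (B l j * y j)) ` {..<n})) ` {..<n})"
    using ne by (intro Max_image_swap) auto
  also have "\<dots> = mp_vec n (mp_mult n A B) y i"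
  proof -
    have "mp_mult n A B i j * y j = Max ((\<lambda>l. A i l * (B l j * y j)) ` {..<n})" if "j < n" for j
      using mult_Max_image[OF _ _ ne, of "y j" "\<lambda>l. A i l * B l j"] assms(3) that
      unfolding mp_mult_def by (simp add: mult_ac image_image)
    then show ?thesis unfolding mp_vec_def by (auto intro!: arg_cong[where f=Max] image_cong)
  qed
  finally show ?thesis by simp
qed

lemma mp_vec_mp_id:
  assumes "i < n" "\<forall>j<n. 0 \<le> y j"
  shows "mp_vec n mp_id y i = y i"
proof (rule order.antisym)
  show "mp_vec n mp_id y i \<le> y i"
    unfolding mp_vec_def mp_id_def using assms by (subst Max_le_iff) auto
  show "y i \<le> mp_vec n mp_id y i"
    unfolding mp_vec_def mp_id_def using assms by (intro Max_ge) (auto simp: image_iff intro!: bexI[of _ i])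
qed

section \<open>Circulant matrices\<close>

definition circ_act :: "nat \<Rightarrow> (nat \<Rightarrow> real) \<Rightarrow> (nat \<Rightarrow> real) \<Rightarrow> nat \<Rightarrow> real" where
  "circ_act n a y = (\<lambda>i. Max ((\<lambda>e. a e * y ((i + e) mod n)) ` {..<n}))"

lemma add_mod_diff_cancel:
  fixes p e n :: nat
  assumes "p < n" "e < n"
  shows "((p + e) mod n + n - p) mod n = e"
proof (cases "p + e < n")
  case True
  then show ?thesis using assms by simp
next
  case False
  then have "(p + e) mod n = p + e - n" using assms by (simp add: mod_if)
  then show ?thesis using False assms by simp
qed

lemma image_rotate_lessThan:
  fixes n s :: nat
  assumes "0 < n"
  shows "(\<lambda>j. (j + s) mod n) ` {..<n} = {..<n}"
proof
  show "(\<lambda>j. (j + s) mod n) ` {..<n} \<subseteq> {..<n}" using assms by (simp add: image_subset_iff)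
  show "{..<n} \<subseteq> (\<lambda>j. (j + s) mod n) ` {..<n}"
  proof
    fix j assume j: "j \<in> {..<n}"
    have "((j + n - s mod n) mod n + s) mod n = (j + n - s mod n + s mod n) mod n"
      by (simp add: mod_add_left_eq mod_add_right_eq)
    also have "\<dots> = j"
    proof -
      have "s mod n \<le> j + n" using assms by (simp add: less_imp_le trans_le_add2)
      then show ?thesis using j by simp
    qed
    finally show "j \<in> (\<lambda>j. (j + s) mod n) ` {..<n}"
      using assms by (auto intro!: image_eqI[of _ _ "(j + n - s mod n) mod n"])
  qed
qed

lemma bij_betw_rotate_lessThan:
  fixes n s :: nat
  assumes "0 < n"
  shows "bij_betw (\<lambda>j. (j + s) mod n) {..<n} {..<n}"
  unfolding bij_betw_def using image_rotate_lessThan[OF assms, of s]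
  by (simp add: eq_card_imp_inj_on)

lemma all_rotate_lessThan_iff:
  fixes n s :: nat
  assumes "0 < n"
  shows "(\<forall>i<n. P ((i + s) mod n)) \<longleftrightarrow> (\<forall>j<n. P j)"
proof -
  have "(\<forall>i<n. P ((i + s) mod n)) \<longleftrightarrow> (\<forall>j\<in>(\<lambda>i. (i + s) mod n) ` {..<n}. P j)" by blast
  then show ?thesis unfolding image_rotate_lessThan[OF assms] by auto
qed

lemma mp_vec_Circ:
  assumes "i < n"
  shows "mp_vec n (Circ n a) y i = circ_act n a y i"
proof -
  have "mp_vec n (Circ n a) y i = Max ((\<lambda>j. Circ n a i j * y j) ` (\<lambda>e. (e + i) mod n) ` {..<n})"
    unfolding mp_vec_def using image_rotate_lessThan[of n i] assms by simp
  also have "\<dots> = circ_act n a y i"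
    unfolding circ_act_def image_image Circ_def
    using add_mod_diff_cancel[OF assms] by (simp add: add.commute)
  finally show ?thesis .
qed

lemma circ_act_cong:
  assumes "0 < n" "\<forall>j<n. y j = z j"
  shows "circ_act n a y = circ_act n a z"
  unfolding circ_act_def using assms by (auto intro!: ext arg_cong[where f=Max] image_cong)

lemma mp_vec_mp_pow_Circ:
  assumes "0 < n" "\<forall>t<n. 0 \<le> a t" "\<forall>j<n. 0 \<le> y j" "i < n"
  shows "mp_vec n (mp_pow n (Circ n a) m) y i = (circ_act n a ^^ m) y i"
  using assms(4)
proof (induction m arbitrary: i)
  case 0
  then show ?case using assms(3) by (simp add: mp_vec_mp_id)
next
  case (Suc m)
  have "\<forall>i j. 0 \<le> Circ n a i j" using assms(1,2) by (simp add: Circ_def)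
  then have "mp_vec n (mp_pow n (Circ n a) (Suc m)) y i
      = mp_vec n (Circ n a) (mp_vec n (mp_pow n (Circ n a) m) y) i"
    using assms by (simp add: mp_vec_mp_mult)
  also have "\<dots> = circ_act n a (mp_vec n (mp_pow n (Circ n a) m) y) i"
    by (rule mp_vec_Circ[OF Suc.prems])
  also have "\<dots> = circ_act n a ((circ_act n a ^^ m) y) i"
    by (rule fun_cong[OF circ_act_cong[OF assms(1)]]) (simp add: Suc.IH)
  finally show ?case by simp
qed

lemma circ_act_ge: "e < n \<Longrightarrow> a e * y ((i + e) mod n) \<le> circ_act n a y i"
  unfolding circ_act_def by (intro Max_ge) auto

lemma circ_act_attained:
  assumes "0 < n"
  obtains e where "e < n" "circ_act n a y i = a e * y ((i + e) mod n)"
proof -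
  have "circ_act n a y i \<in> (\<lambda>e. a e * y ((i + e) mod n)) ` {..<n}"
    unfolding circ_act_def using assms by (intro Max_in) auto
  then show ?thesis using that by blast
qed

lemma circ_act_le:
  assumes "0 < n" "\<And>e. e < n \<Longrightarrow> a e * y ((i + e) mod n) \<le> z"
  shows "circ_act n a y i \<le> z"
  using circ_act_attained[OF assms(1), of a y i] assms(2) by metis

lemma circ_act_pow_nonneg:
  assumes "0 < n" "\<forall>e<n. 0 \<le> a e" "\<forall>j<n. 0 \<le> y j"
  shows "\<forall>j<n. 0 \<le> (circ_act n a ^^ m) y j"
proof (induction m)
  case 0
  then show ?case using assms(3) by simp
next
  case (Suc m)
  have "0 \<le> circ_act n a ((circ_act n a ^^ m) y) j" if "j < n" for j
  proof -
    have "0 \<le> a 0 * (circ_act n a ^^ m) y j" using assms(1,2) Suc that by simp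
    also have "\<dots> \<le> circ_act n a ((circ_act n a ^^ m) y) j"
      using circ_act_ge[of 0 n a "(circ_act n a ^^ m) y" j] assms(1) that by simp
    finally show ?thesis .
  qed
  then show ?case by simp
qed

lemma circ_act_mono:
  assumes "0 < n" "\<forall>e<n. 0 \<le> a e \<and> a e \<le> b e" "\<forall>j<n. 0 \<le> y j \<and> y j \<le> z j"
  shows "circ_act n a y i \<le> circ_act n b z i"
proof (rule circ_act_le[OF assms(1)])
  fix e assume e: "e < n"
  have j: "(i + e) mod n < n" using assms(1) by simp
  have "a e * y ((i + e) mod n) \<le> b e * z ((i + e) mod n)"
  proof (rule mult_mono)
    show "a e \<le> b e" "0 \<le> b e" using assms(2) e by (auto intro: order.trans)
    show "y ((i + e) mod n) \<le> z ((i + e) mod n)" "0 \<le> y ((i + e) mod n)" using assms(3) j by auto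
  qed
  also have "\<dots> \<le> circ_act n b z i" using e by (rule circ_act_ge)
  finally show "a e * y ((i + e) mod n) \<le> circ_act n b z i" .
qed

lemma circ_act_pow_mono:
  assumes "0 < n" "\<forall>e<n. 0 \<le> a e \<and> a e \<le> b e" "\<forall>j<n. 0 \<le> y j \<and> y j \<le> z j"
  shows "\<forall>j<n. (circ_act n a ^^ m) y j \<le> (circ_act n b ^^ m) z j"
proof (induction m)
  case 0
  then show ?case using assms(3) by simp
next
  case (Suc m)
  have "\<forall>j<n. 0 \<le> (circ_act n a ^^ m) y j" using assms by (intro circ_act_pow_nonneg) auto
  then show ?case using Suc by (auto intro!: circ_act_mono[OF assms(1,2)])
qed

lemma circ_act_pow_cong:
  assumes "0 < n" "\<forall>j<n. y j = z j"
  shows "\<forall>j<n. (circ_act n a ^^ m) y j = (circ_act n a ^^ m) z j"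
proof (induction m)
  case 0
  then show ?case using assms(2) by simp
next
  case (Suc m)
  then show ?case using circ_act_cong[OF assms(1) Suc] by simp
qed

lemma circ_act_rotate: "circ_act n a y ((i + s) mod n) = circ_act n a (\<lambda>j. y ((j + s) mod n)) i"
  unfolding circ_act_def
  by (intro arg_cong[where f=Max] image_cong refl) (simp add: mod_add_left_eq mod_add_right_eq add_ac)

lemma circ_act_pow_rotate:
  "(circ_act n a ^^ m) y ((i + s) mod n) = (circ_act n a ^^ m) (\<lambda>j. y ((j + s) mod n)) i"
proof (induction m arbitrary: i)
  case 0
  then show ?case by simp
next
  case (Suc m)
  have "(circ_act n a ^^ m) (\<lambda>j. y ((j + s) mod n)) = (\<lambda>j. (circ_act n a ^^ m) y ((j + s) mod n))"
    using Suc by auto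
  then show ?case by (simp add: circ_act_rotate)
qed

lemma circ_act_scale:
  assumes "0 < n" "0 \<le> c"
  shows "circ_act n a (\<lambda>j. c * y j) i = c * circ_act n a y i"
  unfolding circ_act_def
  using mult_Max_image[OF assms(2), of "{..<n}" "\<lambda>e. a e * y ((i + e) mod n)"] assms(1)
  by (simp add: mult.left_commute lessThan_empty_iff)

lemma circ_act_increasing: "a 0 = 1 \<Longrightarrow> i < n \<Longrightarrow> y i \<le> circ_act n a y i"
  using circ_act_ge[of 0 n a y i] by simp

lemma circ_act_pow_increasing:
  assumes "a 0 = 1" "i < n" "m \<le> m'"
  shows "(circ_act n a ^^ m) y i \<le> (circ_act n a ^^ m') y i"
  using assms(3)
proof (induction m' rule: dec_induct)
  case base
  then show ?case by simp
next
  case (step k)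
  then show ?case using circ_act_increasing[of a i n "(circ_act n a ^^ k) y"] assms(1,2) by simp
qed

lemma circ_act_pow_fixed:
  assumes "0 < n" "\<forall>j<n. circ_act n a y j = y j"
  shows "\<forall>j<n. (circ_act n a ^^ m) y j = y j"
proof (induction m)
  case 0
  then show ?case by simp
next
  case (Suc m)
  then show ?case using assms circ_act_cong[OF assms(1) Suc] by simp
qed

lemma Circ_rotation_cycle_entry:
  assumes "s < n" "j < n"
  shows "Circ n a ((j * s) mod n) (((j + 1) mod n * s) mod n) = a s"
proof -
  have "((j + 1) mod n * s) mod n = ((j + 1) * s) mod n" by (rule mod_mult_left_eq)
  also have "\<dots> = (j * s + s) mod n" by (simp add: algebra_simps)
  also have "\<dots> = ((j * s) mod n + s) mod n" by (rule mod_add_left_eq[symmetric])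
  finally have "((j + 1) mod n * s) mod n = ((j * s) mod n + s) mod n" .
  then show ?thesis unfolding Circ_def using add_mod_diff_cancel[of "(j * s) mod n" n s] assms
    by simp
qed

lemma finite_closed_walks:
  "finite {(k, \<sigma>::nat \<Rightarrow> nat). 1 \<le> k \<and> k \<le> n \<and> (\<forall>j<k. \<sigma> j < n) \<and> (\<forall>j\<ge>k. \<sigma> j = 0)}"
  (is "finite ?W")
proof (rule finite_subset)
  let ?Fun = "{\<sigma>. \<forall>j. (j \<in> {..<n} \<longrightarrow> \<sigma> j \<in> {..<n}) \<and> (j \<notin> {..<n} \<longrightarrow> \<sigma> j = 0)}"
  show "?W \<subseteq> {..n} \<times> ?Fun"
  proof
    fix p assume "p \<in> ?W"
    then obtain k \<sigma> where p: "p = (k, \<sigma>)" and k: "1 \<le> k" "k \<le> n"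
      and \<sigma>: "\<forall>j<k. \<sigma> j < n" "\<forall>j\<ge>k. \<sigma> j = 0" by blast
    have "\<sigma> j < n" "n \<le> j \<Longrightarrow> \<sigma> j = 0" for j using k \<sigma> by (cases "j < k"; simp)+
    then show "p \<in> {..n} \<times> ?Fun" using p k by simp
  qed
  show "finite ({..n} \<times> ?Fun)"
    by (intro finite_cartesian_product finite_atMost finite_set_of_finite_funs) auto
qed

lemma mp_lambda_eqI:
  assumes "\<forall>i<n. \<forall>j<n. 0 \<le> A i j \<and> A i j \<le> L"
    and "1 \<le> k" "k \<le> n" "\<forall>j<k. \<sigma> j < n" "\<forall>j\<ge>k. \<sigma> j = 0"
    and "\<forall>j<k. A (\<sigma> j) (\<sigma> ((j + 1) mod k)) = L"
  shows "mp_lambda n A = L"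
proof -
  define cyc where "cyc k \<sigma> = root k (\<Prod>j<k. A (\<sigma> j) (\<sigma> ((j + 1) mod k)))" for k \<sigma>
  have "0 \<le> L"
  proof -
    have "0 < k" using assms(2) by simp
    then have "\<sigma> 0 < n" "\<sigma> (1 mod k) < n" "A (\<sigma> 0) (\<sigma> (1 mod k)) = L" using assms(4,6) by auto
    then show ?thesis using assms(1) by metis
  qed
  have ub: "cyc k' \<sigma>' \<le> L" if "1 \<le> k'" "\<forall>j<k'. \<sigma>' j < n" for k' \<sigma>'
  proof -
    have "(\<Prod>j<k'. A (\<sigma>' j) (\<sigma>' ((j + 1) mod k'))) \<le> (\<Prod>j<k'. L)"
      using assms(1) that by (intro prod_mono) auto
    then have "cyc k' \<sigma>' \<le> root k' (L ^ k')" unfolding cyc_def using that(1) by (simp add: real_root_le_mono)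
    also have "\<dots> = L" using that(1) \<open>0 \<le> L\<close> by (simp add: real_root_power_cancel)
    finally show ?thesis .
  qed
  have "cyc k \<sigma> = L" unfolding cyc_def using assms(2,6) \<open>0 \<le> L\<close> by (simp add: real_root_power_cancel)
  moreover have "{cyc k \<sigma> | k \<sigma>. 1 \<le> k \<and> k \<le> n \<and> (\<forall>j<k. \<sigma> j < n) \<and> (\<forall>j\<ge>k. \<sigma> j = 0)}
      = case_prod cyc ` {(k, \<sigma>). 1 \<le> k \<and> k \<le> n \<and> (\<forall>j<k. \<sigma> j < n) \<and> (\<forall>j\<ge>k. \<sigma> j = 0)}"
    by (auto simp: image_iff)
  ultimately show ?thesis unfolding mp_lambda_def cyc_def[symmetric]
    using finite_closed_walks[of n] ub assms(2-5) by (intro Max_eqI) auto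
qed

lemma mp_lambda_Circ:
  assumes "0 < n" "\<forall>t<n. 0 \<le> a t"
  shows "mp_lambda n (Circ n a) = Max (a ` {..<n})"
proof -
  obtain s where s: "s < n" "\<forall>t<n. a t \<le> a s" using ex_argmax_lessThan[OF assms(1)] .
  define \<rho> where "\<rho> j = (if j < n then (j * s) mod n else 0)" for j
  have "mp_lambda n (Circ n a) = a s"
  proof (rule mp_lambda_eqI[where k=n and \<sigma>=\<rho>])
    show "\<forall>i<n. \<forall>j<n. 0 \<le> Circ n a i j \<and> Circ n a i j \<le> a s"
      unfolding Circ_def using assms s by simp
    show "\<forall>j<n. Circ n a (\<rho> j) (\<rho> ((j + 1) mod n)) = a s"
      using Circ_rotation_cycle_entry[OF s(1)] assms(1) unfolding \<rho>_def by simp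
  qed (use assms(1) in \<open>auto simp: \<rho>_def\<close>)
  moreover have "Max (a ` {..<n}) = a s" using s by (intro Max_eqI) auto
  ultimately show ?thesis by simp
qed

lemma Attr_Circ_iff:
  assumes "0 < n" "\<forall>t<n. 0 \<le> a t" "nonneg_vec n x"
  shows "x \<in> Attr n (Circ n a) \<longleftrightarrow>
    (\<exists>t. \<forall>i<n. (circ_act n a ^^ Suc t) x i = Max (a ` {..<n}) * (circ_act n a ^^ t) x i)"
proof -
  have "\<forall>i<n. mp_vec n (mp_pow n (Circ n a) m) x i = (circ_act n a ^^ m) x i" for m
    using mp_vec_mp_pow_Circ assms unfolding nonneg_vec_def by blast
  then show ?thesis unfolding Attr_def mp_lambda_Circ[OF assms(1,2)] using assms(3)
    by (simp del: mp_pow.simps funpow.simps)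
qed

lemma Attr_Circ_zero:
  assumes "0 < n" "\<forall>t<n. a t = 0" "nonneg_vec n x"
  shows "x \<in> Attr n (Circ n a)"
proof -
  have "a ` {..<n} = {0}" using assms(1,2) by auto
  moreover have "circ_act n a x i = 0" for i
  proof -
    have "(\<lambda>e. a e * x ((i + e) mod n)) ` {..<n} = {0}" using assms(1,2) by auto
    then show ?thesis unfolding circ_act_def by simp
  qed
  ultimately have "\<forall>i<n. (circ_act n a ^^ Suc 0) x i = Max (a ` {..<n}) * (circ_act n a ^^ 0) x i"
    by simp
  moreover have "\<forall>t<n. 0 \<le> a t" using assms(2) by simp
  ultimately show ?thesis using Attr_Circ_iff[OF assms(1) _ assms(3)] by blast
qed

section \<open>Walks and stabilization\<close>

definition walk_weight :: "nat \<Rightarrow> (nat \<Rightarrow> real) \<Rightarrow> nat list \<Rightarrow> (nat \<Rightarrow> real) \<Rightarrow> nat \<Rightarrow> real" where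
  "walk_weight n b es y i = prod_list (map b es) * y ((i + sum_list es) mod n)"

definition normal_coeffs :: "nat \<Rightarrow> (nat \<Rightarrow> real) \<Rightarrow> bool" where
  "normal_coeffs n b \<longleftrightarrow> b 0 = 1 \<and> (\<forall>e<n. 0 \<le> b e \<and> b e \<le> 1)"

lemma prod_list_le_one:
  fixes xs :: "'a::linordered_semidom list"
  assumes "\<And>x. x \<in> set xs \<Longrightarrow> 0 \<le> x \<and> x \<le> 1"
  shows "prod_list xs \<le> 1"
  using assms by (induction xs) (auto intro: mult_le_one prod_list_nonneg)

lemma walk_weight_Cons:
  "walk_weight n b (e # es) y i = b e * walk_weight n b es y ((i + e) mod n)"
  unfolding walk_weight_def by (simp add: mod_add_left_eq add.assoc)

lemma walk_weight_le_circ_act_pow: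
  assumes "0 < n" "\<forall>e<n. 0 \<le> b e" "\<forall>j<n. 0 \<le> y j" "set es \<subseteq> {..<n}" "i < n"
  shows "walk_weight n b es y i \<le> (circ_act n b ^^ length es) y i"
  using assms(4,5)
proof (induction es arbitrary: i)
  case Nil
  then show ?case by (simp add: walk_weight_def)
next
  case (Cons e es)
  have e: "e < n" using Cons.prems by auto
  have "walk_weight n b (e # es) y i \<le> b e * (circ_act n b ^^ length es) y ((i + e) mod n)"
    unfolding walk_weight_Cons using Cons assms(1,2) e by (intro mult_left_mono) auto
  also have "\<dots> \<le> (circ_act n b ^^ length (e # es)) y i" using circ_act_ge[OF e] by simp
  finally show ?case .
qed

lemma circ_act_pow_walk_weight:
  assumes "0 < n" "i < n"
  obtains es where "length es = m" "set es \<subseteq> {..<n}" "(circ_act n b ^^ m) y i = walk_weight n b es y i"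
  using assms(2)
proof (induction m arbitrary: i thesis)
  case 0
  then show ?case by (simp add: walk_weight_def)
next
  case (Suc m)
  obtain e where e: "e < n" "(circ_act n b ^^ Suc m) y i = b e * (circ_act n b ^^ m) y ((i + e) mod n)"
    using circ_act_attained[OF assms(1)] by (metis funpow.simps(2) o_apply)
  obtain es where "length es = m" "set es \<subseteq> {..<n}"
      "(circ_act n b ^^ m) y ((i + e) mod n) = walk_weight n b es y ((i + e) mod n)"
    using Suc.IH[of "(i + e) mod n"] assms(1) by auto
  then show ?case using e Suc.prems(1)[of "e # es"] by (simp add: walk_weight_Cons)
qed

text \<open>Pigeonhole on the \<open>n + 1\<close> prefix sums modulo \<open>n\<close>.\<close>
lemma split_sum_list_mod_zero:
  fixes es :: "nat list"
  assumes "0 < n" "n \<le> length es"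
  obtains u w r where "es = u @ w @ r" "w \<noteq> []" "sum_list w mod n = 0"
proof -
  let ?f = "\<lambda>k. sum_list (take k es) mod n"
  have "card (?f ` {..n}) \<le> card {..<n}" using assms(1) by (intro card_mono) auto
  then have "\<not> inj_on ?f {..n}" by (intro pigeonhole) simp
  then obtain p0 q0 where pq0: "p0 \<le> n" "q0 \<le> n" "p0 \<noteq> q0" "?f p0 = ?f q0"
    unfolding inj_on_def by auto
  define p q where "p = min p0 q0" "q = max p0 q0"
  have pq: "p < q" "q \<le> n" "?f p = ?f q" using pq0 unfolding p_q_def by (auto simp: min_def max_def)
  define u w r where "u = take p es" "w = take (q - p) (drop p es)" "r = drop q es"
  have tq: "take q es = u @ w" unfolding u_w_r_def using take_add[of p "q - p" es] pq(1) by simp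
  have "es = (u @ w) @ r" unfolding tq[symmetric] u_w_r_def(3) by simp
  moreover have "w \<noteq> []" using pq assms(2) unfolding u_w_r_def by simp
  moreover have "sum_list u mod n = (sum_list u + sum_list w) mod n" using pq(3) tq unfolding u_w_r_def(1) by simp
  then have "sum_list w mod n = 0"
    using mod_eq_dvd_iff_nat[of "sum_list u" "sum_list u + sum_list w" n] by (simp add: dvd_eq_mod_eq_0)
  ultimately show ?thesis using that by simp
qed

lemma walk_weight_remove_cycle:
  assumes "0 < n" "normal_coeffs n b" "\<forall>j<n. 0 \<le> y j" "set es \<subseteq> {..<n}" "n \<le> length es"
  obtains es' where "length es' < length es" "set es' \<subseteq> {..<n}"
    "walk_weight n b es y i \<le> walk_weight n b es' y i"
proof -
  obtain u w r where es: "es = u @ w @ r" and "w \<noteq> []" and w_cycle: "sum_list w mod n = 0"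
    using split_sum_list_mod_zero[OF assms(1,5)] .
  have b: "\<forall>e<n. 0 \<le> b e \<and> b e \<le> 1" using assms(2) unfolding normal_coeffs_def by simp
  have sets: "set u \<subseteq> {..<n}" "set w \<subseteq> {..<n}" "set r \<subseteq> {..<n}" using assms(4) es by auto
  have "(i + sum_list es) mod n = (i + sum_list (u @ r) + sum_list w) mod n"
    unfolding es by (simp add: add_ac)
  also have "\<dots> = (i + sum_list (u @ r) + sum_list w mod n) mod n" by (rule mod_add_right_eq[symmetric])
  finally have "(i + sum_list es) mod n = (i + sum_list (u @ r)) mod n" using w_cycle by simp
  then have "walk_weight n b es y i = prod_list (map b w) * walk_weight n b (u @ r) y i"
    unfolding walk_weight_def by (simp add: es)
  also have "\<dots> \<le> walk_weight n b (u @ r) y i"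
  proof (rule mult_left_le_one_le)
    show "prod_list (map b w) \<le> 1" using b sets(2) by (intro prod_list_le_one) auto
    show "0 \<le> prod_list (map b w)" using b sets(2) by (intro prod_list_nonneg) auto
    show "0 \<le> walk_weight n b (u @ r) y i"
      unfolding walk_weight_def using b sets assms(1,3) by (intro mult_nonneg_nonneg prod_list_nonneg) auto
  qed
  finally show ?thesis using that[of "u @ r"] sets es \<open>w \<noteq> []\<close> by simp
qed

lemma circ_act_pow_le_stable:
  assumes "0 < n" "normal_coeffs n b" "\<forall>j<n. 0 \<le> y j" "i < n"
  shows "(circ_act n b ^^ m) y i \<le> (circ_act n b ^^ (n - 1)) y i"
proof (induction m rule: less_induct)
  case (less m)
  have b: "b 0 = 1" "\<forall>e<n. 0 \<le> b e" using assms(2) unfolding normal_coeffs_def by auto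
  show ?case
  proof (cases "m \<le> n - 1")
    case True
    then show ?thesis using circ_act_pow_increasing[of b i n m "n - 1" y] b(1) assms(4) by simp
  next
    case False
    obtain es where es: "length es = m" "set es \<subseteq> {..<n}" "(circ_act n b ^^ m) y i = walk_weight n b es y i"
      using circ_act_pow_walk_weight[OF assms(1,4)] .
    have "n \<le> length es" using es(1) False by simp
    then obtain es' where es': "length es' < m" "set es' \<subseteq> {..<n}"
        "walk_weight n b es y i \<le> walk_weight n b es' y i"
      using walk_weight_remove_cycle[OF assms(1-3) es(2)] es(1) by metis
    have "(circ_act n b ^^ m) y i \<le> (circ_act n b ^^ length es') y i"
      using es(3) es'(3) walk_weight_le_circ_act_pow[OF assms(1) b(2) assms(3) es'(2) assms(4)] by simp
    also have "\<dots> \<le> (circ_act n b ^^ (n - 1)) y i" using less es'(1) by simp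
    finally show ?thesis .
  qed
qed

lemma circ_act_pow_stable:
  assumes "0 < n" "normal_coeffs n b" "\<forall>j<n. 0 \<le> y j" "i < n" "n - 1 \<le> m"
  shows "(circ_act n b ^^ m) y i = (circ_act n b ^^ (n - 1)) y i"
  using circ_act_pow_le_stable[OF assms(1-4)] circ_act_pow_increasing[of b i n "n - 1" m y] assms
  unfolding normal_coeffs_def by (simp add: order.antisym)

text \<open>With normalized coefficients, \<open>circ_star n b x\<close> is the max-plus Kleene star
  \<open>b\<^sup>* \<otimes> x = max\<^sub>m b\<^sup>m \<otimes> x\<close>.\<close>
definition circ_star :: "nat \<Rightarrow> (nat \<Rightarrow> real) \<Rightarrow> (nat \<Rightarrow> real) \<Rightarrow> nat \<Rightarrow> real" where
  "circ_star n b x = (circ_act n b ^^ (n - 1)) x"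

lemma circ_star_fixed:
  assumes "0 < n" "normal_coeffs n b" "\<forall>j<n. 0 \<le> x j"
  shows "\<forall>j<n. circ_act n b (circ_star n b x) j = circ_star n b x j"
proof (intro allI impI)
  fix j assume j: "j < n"
  have "circ_act n b (circ_star n b x) j = (circ_act n b ^^ Suc (n - 1)) x j"
    unfolding circ_star_def by simp
  also have "\<dots> = circ_star n b x j"
    unfolding circ_star_def by (rule circ_act_pow_stable[OF assms j]) simp
  finally show "circ_act n b (circ_star n b x) j = circ_star n b x j" .
qed

section \<open>The attractor of a circulant\<close>

definition rotation_invariant :: "nat \<Rightarrow> nat \<Rightarrow> (nat \<Rightarrow> real) \<Rightarrow> bool" where
  "rotation_invariant n s F \<longleftrightarrow> (\<forall>i<n. F ((i + s) mod n) = F i)"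

text \<open>If \<open>z = b\<^sup>t\<^sup>+\<^sup>1 x\<close> satisfies \<open>z\<^sub>j\<^sub>+\<^sub>s = (b\<^sup>t x)\<^sub>j\<close>, then \<open>z\<^sub>j\<^sub>+\<^sub>s \<le> z\<^sub>j\<close>; rotation
  preserves \<open>\<Sum>\<^sub>j z\<^sub>j\<close>, so all these inequalities are equalities.\<close>
lemma rotating_step_stationary:
  assumes "0 < n" "b 0 = 1"
    "\<forall>j<n. (circ_act n b ^^ Suc t) x ((j + s) mod n) = (circ_act n b ^^ t) x j"
  shows "rotation_invariant n s ((circ_act n b ^^ Suc t) x)"
    "\<forall>j<n. (circ_act n b ^^ t) x j = (circ_act n b ^^ Suc t) x j"
proof -
  define z where "z = (circ_act n b ^^ Suc t) x"
  have le: "z ((j + s) mod n) \<le> z j" if "j \<in> {..<n}" for j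
    using assms(3) circ_act_pow_increasing[of b j n t "Suc t" x] assms(2) that unfolding z_def by simp
  have sum_eq: "(\<Sum>j<n. z ((j + s) mod n)) = (\<Sum>j<n. z j)"
    using sum.reindex_bij_betw[OF bij_betw_rotate_lessThan[OF assms(1)], of z s] by simp
  have z_rot: "\<forall>j<n. z ((j + s) mod n) = z j"
  proof (intro allI impI)
    fix j assume "j < n"
    then show "z ((j + s) mod n) = z j" by (intro sum_mono_inv[OF sum_eq le]) auto
  qed
  then show "rotation_invariant n s ((circ_act n b ^^ Suc t) x)"
    unfolding rotation_invariant_def z_def .
  show "\<forall>j<n. (circ_act n b ^^ t) x j = (circ_act n b ^^ Suc t) x j"
    using z_rot assms(3) unfolding z_def by (simp del: funpow.simps)
qed

lemma circ_star_eq_stationary: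
  assumes "0 < n" "normal_coeffs n b" "\<forall>j<n. 0 \<le> x j"
    "\<forall>j<n. (circ_act n b ^^ t) x j = (circ_act n b ^^ Suc t) x j"
  shows "\<forall>j<n. circ_star n b x j = (circ_act n b ^^ t) x j"
proof (intro allI impI)
  fix j assume j: "j < n"
  let ?y = "(circ_act n b ^^ t) x"
  have fixed: "\<forall>j<n. circ_act n b ?y j = ?y j" using assms(4) by simp
  have "circ_star n b x j = (circ_act n b ^^ (n - 1 + t)) x j"
    unfolding circ_star_def by (rule circ_act_pow_stable[OF assms(1-3) j, symmetric]) simp
  also have "\<dots> = (circ_act n b ^^ (n - 1)) ?y j" by (simp only: funpow_add o_apply)
  also have "\<dots> = ?y j" using circ_act_pow_fixed[OF assms(1) fixed] j by simp
  finally show "circ_star n b x j = ?y j" .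
qed

lemma rotation_invariant_iff_eventually_rotating:
  assumes "0 < n" "normal_coeffs n b" "nonneg_vec n x"
  shows "rotation_invariant n s (circ_star n b x) \<longleftrightarrow>
    (\<exists>t. \<forall>j<n. (circ_act n b ^^ Suc t) x ((j + s) mod n) = (circ_act n b ^^ t) x j)"
proof -
  have x: "\<forall>j<n. 0 \<le> x j" using assms(3) unfolding nonneg_vec_def .
  have b0: "b 0 = 1" using assms(2) unfolding normal_coeffs_def by simp
  show ?thesis
  proof
    assume "rotation_invariant n s (circ_star n b x)"
    moreover have "(circ_act n b ^^ Suc (n - 1)) x j = circ_star n b x j" if "j < n" for j
      unfolding circ_star_def by (rule circ_act_pow_stable[OF assms(1,2) x that]) simp
    ultimately show "\<exists>t. \<forall>j<n. (circ_act n b ^^ Suc t) x ((j + s) mod n) = (circ_act n b ^^ t) x j"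
      using assms(1) unfolding rotation_invariant_def circ_star_def
      by (intro exI[of _ "n - 1"]) (simp del: funpow.simps)
  next
    assume "\<exists>t. \<forall>j<n. (circ_act n b ^^ Suc t) x ((j + s) mod n) = (circ_act n b ^^ t) x j"
    then obtain t where t: "\<forall>j<n. (circ_act n b ^^ Suc t) x ((j + s) mod n) = (circ_act n b ^^ t) x j" ..
    note stationary = rotating_step_stationary[OF assms(1) b0 t]
    have "\<forall>j<n. circ_star n b x j = (circ_act n b ^^ Suc t) x j"
      using circ_star_eq_stationary[OF assms(1,2) x stationary(2)] stationary(2) by simp
    then show "rotation_invariant n s (circ_star n b x)"
      using stationary(1) assms(1) unfolding rotation_invariant_def by simp
  qed
qed

definition circ_normalize :: "nat \<Rightarrow> (nat \<Rightarrow> real) \<Rightarrow> nat \<Rightarrow> nat \<Rightarrow> real" where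
  "circ_normalize n a s = (\<lambda>e. a ((e + s) mod n) / a s)"

lemma normal_coeffs_circ_normalize:
  assumes "0 < n" "\<forall>t<n. 0 \<le> a t" "s < n" "\<forall>t<n. a t \<le> a s" "0 < a s"
  shows "normal_coeffs n (circ_normalize n a s)"
  unfolding normal_coeffs_def circ_normalize_def using assms by simp

lemma circ_act_circ_normalize:
  assumes "0 < n" "0 < a s"
  shows "circ_act n a y i = a s * circ_act n (circ_normalize n a s) y ((i + s) mod n)"
proof -
  have "a s * circ_act n (circ_normalize n a s) y ((i + s) mod n)
      = Max ((\<lambda>e. a ((e + s) mod n) * y ((i + (e + s) mod n) mod n)) ` {..<n})"
    unfolding circ_act_def circ_normalize_def
    using mult_Max_image[of "a s" "{..<n}"] assms
    by (simp add: image_image lessThan_empty_iff mod_add_left_eq mod_add_right_eq add_ac)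
  also have "\<dots> = Max ((\<lambda>f. a f * y ((i + f) mod n)) ` (\<lambda>e. (e + s) mod n) ` {..<n})"
    by (simp add: image_image)
  also have "\<dots> = circ_act n a y i"
    unfolding circ_act_def image_rotate_lessThan[OF assms(1)] ..
  finally show ?thesis by simp
qed

lemma circ_act_pow_circ_normalize:
  assumes "0 < n" "0 < a s" "i < n"
  shows "(circ_act n a ^^ m) y i = a s ^ m * (circ_act n (circ_normalize n a s) ^^ m) y ((i + m * s) mod n)"
  using assms(3)
proof (induction m arbitrary: i)
  case 0
  then show ?case by simp
next
  case (Suc m)
  let ?b = "circ_normalize n a s" and ?Z = "(circ_act n (circ_normalize n a s) ^^ m) y"
  have "(circ_act n a ^^ Suc m) y i = a s * circ_act n ?b ((circ_act n a ^^ m) y) ((i + s) mod n)"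
    using circ_act_circ_normalize[of n a s] assms(1,2) by simp
  also have "circ_act n ?b ((circ_act n a ^^ m) y) = circ_act n ?b (\<lambda>j. a s ^ m * ?Z ((j + m * s) mod n))"
    using Suc.IH by (intro circ_act_cong[OF assms(1)]) simp
  also have "circ_act n ?b (\<lambda>j. a s ^ m * ?Z ((j + m * s) mod n)) ((i + s) mod n)
      = a s ^ m * circ_act n ?b (\<lambda>j. ?Z ((j + m * s) mod n)) ((i + s) mod n)"
    using assms(1,2) by (simp add: circ_act_scale)
  also have "circ_act n ?b (\<lambda>j. ?Z ((j + m * s) mod n)) ((i + s) mod n)
      = (circ_act n ?b ^^ Suc m) y ((i + Suc m * s) mod n)"
    using circ_act_rotate[of n ?b ?Z "(i + s) mod n" "m * s", symmetric]
    by (simp add: mod_add_left_eq mod_add_right_eq algebra_simps)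
  finally show ?case by simp
qed

lemma circ_eigenvector_step_iff:
  assumes "0 < n" "0 < a s"
  shows "(\<forall>i<n. (circ_act n a ^^ Suc t) x i = a s * (circ_act n a ^^ t) x i) \<longleftrightarrow>
    (\<forall>j<n. (circ_act n (circ_normalize n a s) ^^ Suc t) x ((j + s) mod n)
      = (circ_act n (circ_normalize n a s) ^^ t) x j)"
proof -
  let ?Z = "\<lambda>m. (circ_act n (circ_normalize n a s) ^^ m) x"
  have "(circ_act n a ^^ Suc t) x i = a s * (circ_act n a ^^ t) x i \<longleftrightarrow>
      ?Z (Suc t) (((i + t * s) mod n + s) mod n) = ?Z t ((i + t * s) mod n)" if "i < n" for i
  proof -
    have "(i + Suc t * s) mod n = ((i + t * s) mod n + s) mod n"
      by (simp add: mod_add_left_eq mod_add_right_eq algebra_simps)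
    then have "(circ_act n a ^^ Suc t) x i = a s ^ Suc t * ?Z (Suc t) (((i + t * s) mod n + s) mod n)"
      using circ_act_pow_circ_normalize[of n a s i "Suc t" x] assms that by (simp del: funpow.simps)
    moreover have "(circ_act n a ^^ t) x i = a s ^ t * ?Z t ((i + t * s) mod n)"
      using circ_act_pow_circ_normalize[of n a s i t x] assms that by blast
    ultimately show ?thesis using assms(2) by (simp del: funpow.simps)
  qed
  then show ?thesis using all_rotate_lessThan_iff[OF assms(1), of "\<lambda>j. ?Z (Suc t) ((j + s) mod n) = ?Z t j"]
    by simp
qed

lemma Attr_Circ_iff_rotation_invariant:
  assumes "0 < n" "\<forall>t<n. 0 \<le> a t" "s < n" "\<forall>t<n. a t \<le> a s" "0 < a s" "nonneg_vec n x"
  shows "x \<in> Attr n (Circ n a) \<longleftrightarrow> rotation_invariant n s (circ_star n (circ_normalize n a s) x)"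
proof -
  have "Max (a ` {..<n}) = a s" using assms(3,4) by (intro Max_eqI) auto
  then show ?thesis
    using Attr_Circ_iff[OF assms(1,2,6)] circ_eigenvector_step_iff[of n a s] assms(1,5)
      rotation_invariant_iff_eventually_rotating[OF assms(1) normal_coeffs_circ_normalize[OF assms(1-5)] assms(6)]
    by simp
qed

section \<open>Comparison and limits\<close>

lemma circ_star_rotation_invariant_mono:
  assumes "0 < n" "normal_coeffs n b" "normal_coeffs n b'" "\<forall>e<n. b e \<le> b' e" "nonneg_vec n x"
    "rotation_invariant n s (circ_star n b x)"
  shows "rotation_invariant n s (circ_star n b' x)"
proof -
  define F G where "F = circ_star n b x" "G = circ_star n b' x"
  have x: "\<forall>j<n. 0 \<le> x j" using assms(5) unfolding nonneg_vec_def .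
  have b: "b 0 = 1" "\<forall>e<n. 0 \<le> b e \<and> b e \<le> b' e" "\<forall>e<n. 0 \<le> b' e \<and> b' e \<le> b' e"
    using assms(2-4) unfolding normal_coeffs_def by auto
  have F: "\<forall>j<n. 0 \<le> x j \<and> x j \<le> F j"
    using x circ_act_pow_increasing[of b _ n 0 "n - 1" x] b(1) unfolding F_G_def circ_star_def by auto
  have FG: "\<forall>j<n. 0 \<le> F j \<and> F j \<le> G j"
  proof (intro allI impI)
    fix j assume j: "j < n"
    have "0 \<le> x j" "x j \<le> F j" using F j by auto
    moreover have "F j \<le> G j"
      using circ_act_pow_mono[OF assms(1) b(2), of x x "n - 1"] x j unfolding F_G_def circ_star_def by auto
    ultimately show "0 \<le> F j \<and> F j \<le> G j" by linarith
  qed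
  have G_fixed: "\<forall>j<n. circ_star n b' G j = G j"
    using circ_act_pow_fixed[OF assms(1) circ_star_fixed[OF assms(1,3) x]] unfolding F_G_def circ_star_def
    by simp
  have star_F: "circ_star n b' F j = G j" if "j < n" for j
  proof (rule order.antisym)
    show "circ_star n b' F j \<le> G j"
      using circ_act_pow_mono[OF assms(1) b(3) FG, of "n - 1"] G_fixed that unfolding circ_star_def by auto
    show "G j \<le> circ_star n b' F j"
      using circ_act_pow_mono[OF assms(1) b(3) F, of "n - 1"] that unfolding F_G_def circ_star_def by auto
  qed
  have "circ_star n b' F ((i + s) mod n) = circ_star n b' F i" if "i < n" for i
  proof -
    have "circ_star n b' F ((i + s) mod n) = circ_star n b' (\<lambda>j. F ((j + s) mod n)) i"
      unfolding circ_star_def by (rule circ_act_pow_rotate)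
    also have "\<dots> = circ_star n b' F i"
      using circ_act_pow_cong[OF assms(1), where y="\<lambda>j. F ((j + s) mod n)" and z=F and a=b' and m="n - 1"]
        assms(6) that
      unfolding rotation_invariant_def F_G_def circ_star_def by simp
    finally show ?thesis .
  qed
  then show ?thesis unfolding rotation_invariant_def F_G_def[symmetric] using star_F assms(1) by simp
qed

lemma Attr_Circ_dominated:
  assumes "0 < n" "\<forall>t<n. 0 \<le> c t" "\<forall>t<n. 0 \<le> a t" "s < n"
    "\<forall>t<n. c t \<le> c s" "\<forall>t<n. a t \<le> a s" "0 < c s" "0 < a s"
    "\<forall>t<n. c t / c s \<le> a t / a s" "nonneg_vec n x" "x \<in> Attr n (Circ n c)"
  shows "x \<in> Attr n (Circ n a)"
proof -
  have le: "\<forall>e<n. circ_normalize n c s e \<le> circ_normalize n a s e"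
    unfolding circ_normalize_def using assms(1,9) by simp
  have "rotation_invariant n s (circ_star n (circ_normalize n c s) x)"
    using assms(11) Attr_Circ_iff_rotation_invariant[OF assms(1,2,4,5,7,10)] by simp
  then have "rotation_invariant n s (circ_star n (circ_normalize n a s) x)"
    by (rule circ_star_rotation_invariant_mono[OF assms(1) normal_coeffs_circ_normalize[OF assms(1,2,4,5,7)]
        normal_coeffs_circ_normalize[OF assms(1,3,4,6,8)] le assms(10)])
  then show ?thesis using Attr_Circ_iff_rotation_invariant[OF assms(1,3,4,6,8,10)] by simp
qed

lemma tendsto_circ_act:
  assumes "0 < n" "\<forall>e<n. (\<lambda>j. b j e) \<longlonglongrightarrow> c e" "\<forall>k<n. (\<lambda>j. Y j k) \<longlonglongrightarrow> Z k"
  shows "(\<lambda>j. circ_act n (b j) (Y j) i) \<longlonglongrightarrow> circ_act n c Z i"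
  unfolding circ_act_def using assms by (intro tendsto_Max_image tendsto_mult) auto

lemma tendsto_circ_act_pow:
  assumes "0 < n" "\<forall>e<n. (\<lambda>j. b j e) \<longlonglongrightarrow> c e" "i < n"
  shows "(\<lambda>j. (circ_act n (b j) ^^ m) y i) \<longlonglongrightarrow> (circ_act n c ^^ m) y i"
  using assms(3)
proof (induction m arbitrary: i)
  case 0
  then show ?case by simp
next
  case (Suc m)
  then show ?case using tendsto_circ_act[OF assms(1,2)] by simp
qed

lemma rotation_invariant_limit:
  assumes "0 < n" "\<forall>i<n. (\<lambda>j. F j i) \<longlonglongrightarrow> G i" "\<exists>\<^sub>F j in sequentially. rotation_invariant n s (F j)"
  shows "rotation_invariant n s G"
  unfolding rotation_invariant_def
proof (intro allI impI)
  fix i assume i: "i < n"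
  have "(i + s) mod n < n" using assms(1) by simp
  note lim_rot = assms(2)[rule_format, OF this] and lim_i = assms(2)[rule_format, OF i]
  have le: "\<exists>\<^sub>F j in sequentially. F j ((i + s) mod n) \<le> F j i"
    and ge: "\<exists>\<^sub>F j in sequentially. F j i \<le> F j ((i + s) mod n)"
    using assms(3) i by (auto simp: rotation_invariant_def elim: frequently_elim1)
  show "G ((i + s) mod n) = G i"
    by (rule order.antisym[OF tendsto_le_frequently[OF lim_rot lim_i le]
          tendsto_le_frequently[OF lim_i lim_rot ge]])
qed

lemma Attr_Circ_closed:
  assumes "0 < n" "\<And>j. \<forall>t<n. 0 \<le> a j t" "\<forall>t<n. (\<lambda>j. a j t) \<longlonglongrightarrow> c t"
    "\<And>j. x \<in> Attr n (Circ n (a j))" "nonneg_vec n x"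
  shows "x \<in> Attr n (Circ n c)"
proof -
  have c: "\<forall>t<n. 0 \<le> c t"
  proof (intro allI impI)
    fix t assume t: "t < n"
    show "0 \<le> c t" by (rule LIMSEQ_le_const[OF assms(3)[rule_format, OF t]]) (use assms(2) t in auto)
  qed
  obtain s where s: "s < n" and max_s: "\<exists>\<^sub>F j in sequentially. \<forall>t<n. a j t \<le> a j s"
    and c_s: "\<forall>t<n. c t \<le> c s"
    using frequently_argmax_tendsto[OF assms(1,3)] .
  show ?thesis
  proof (cases "c s = 0")
    case True
    then show ?thesis using Attr_Circ_zero[OF assms(1) _ assms(5)] c c_s by (simp add: order.antisym)
  next
    case False
    then have "0 < c s" using c s by (simp add: order.not_eq_order_implies_strict)
    then have "\<forall>\<^sub>F j in sequentially. 0 < a j s" by (rule order_tendstoD(1)[OF assms(3)[rule_format, OF s]])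
    then have "\<exists>\<^sub>F j in sequentially. 0 < a j s \<and> (\<forall>t<n. a j t \<le> a j s)"
      using frequently_eventually_conj[OF max_s] by simp
    then have freq: "\<exists>\<^sub>F j in sequentially. rotation_invariant n s (circ_star n (circ_normalize n (a j) s) x)"
    proof (rule frequently_elim1)
      fix j assume "0 < a j s \<and> (\<forall>t<n. a j t \<le> a j s)"
      then show "rotation_invariant n s (circ_star n (circ_normalize n (a j) s) x)"
        using Attr_Circ_iff_rotation_invariant[OF assms(1) assms(2)[of j] s, where x=x] assms(4,5) by simp
    qed
    have lim: "\<forall>i<n. (\<lambda>j. circ_star n (circ_normalize n (a j) s) x i)
        \<longlonglongrightarrow> circ_star n (circ_normalize n c s) x i"
      unfolding circ_star_def using assms(1,3) \<open>0 < c s\<close> s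
      by (auto intro!: tendsto_circ_act_pow simp: circ_normalize_def intro!: tendsto_divide)
    have "rotation_invariant n s (circ_star n (circ_normalize n c s) x)"
      by (rule rotation_invariant_limit[OF assms(1) lim freq])
    then show ?thesis using Attr_Circ_iff_rotation_invariant[OF assms(1) c s c_s \<open>0 < c s\<close> assms(5)] by simp
  qed
qed

section \<open>Interval circulants\<close>

lemma is_interval_lh_closure:
  assumes "is_interval_lh lo hi S"
  shows "0 \<le> lo" "S \<subseteq> {lo..hi}" "lo \<in> closure S" "hi \<in> closure S"
proof -
  have S: "S \<noteq> {}" "S = {lo..hi} \<or> S = {lo<..<hi} \<or> S = {lo<..hi} \<or> S = {lo..<hi}"
    using assms unfolding is_interval_lh_def by auto
  show "0 \<le> lo" using assms unfolding is_interval_lh_def by simp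
  show "S \<subseteq> {lo..hi}" using S(2) by auto
  have "{lo..hi} \<subseteq> closure S"
  proof (cases "S = {lo..hi}")
    case True
    then show ?thesis using closure_subset by blast
  next
    case False
    then have "lo < hi" "{lo<..<hi} \<subseteq> S" using S by auto
    then show ?thesis using closure_mono[of "{lo<..<hi}" S] by simp
  qed
  moreover have "lo \<le> hi" using S by auto
  ultimately show "lo \<in> closure S" "hi \<in> closure S" by auto
qed

lemma Attr_Ak_of_Attr_IC:
  assumes "0 < n" "\<forall>t<n. is_interval_lh (lo t) (hi t) (I t)" "nonneg_vec n x"
    "\<forall>A\<in>IC n I. x \<in> Attr n A" "k < n"
  shows "x \<in> Attr n (Ak n lo hi k)"
proof -
  define c where "c t = (if t = k then hi t else lo t)" for t
  have "\<forall>t\<in>{..<n}. \<exists>f. (\<forall>j. f j \<in> I t) \<and> f \<longlonglongrightarrow> c t"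
  proof
    fix t assume "t \<in> {..<n}"
    then have "c t \<in> closure (I t)"
      using is_interval_lh_closure(3,4)[of "lo t" "hi t" "I t"] assms(2) unfolding c_def by auto
    then show "\<exists>f. (\<forall>j. f j \<in> I t) \<and> f \<longlonglongrightarrow> c t" unfolding closure_sequential .
  qed
  then obtain f where f: "\<forall>t\<in>{..<n}. (\<forall>j. f t j \<in> I t) \<and> f t \<longlonglongrightarrow> c t"
    by (auto dest: bchoice)
  have "x \<in> Attr n (Circ n c)"
  proof (rule Attr_Circ_closed[OF assms(1), of "\<lambda>j t. f t j"])
    show "\<forall>t<n. 0 \<le> f t j" for j
    proof (intro allI impI)
      fix t assume t: "t < n"
      have "f t j \<in> I t" using f t by simp
      moreover have "I t \<subseteq> {lo t..hi t}" "0 \<le> lo t"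
        using is_interval_lh_closure(1,2)[of "lo t" "hi t" "I t"] assms(2) t by auto
      ultimately show "0 \<le> f t j" by auto
    qed
    show "x \<in> Attr n (Circ n (\<lambda>t. f t j))" for j
      using assms(4) f unfolding IC_def by blast
  qed (use f assms(3) in auto)
  then show ?thesis unfolding Ak_def c_def .
qed

lemma vertex_coeffs_dominated:
  fixes lo hi a :: "nat \<Rightarrow> real"
  assumes "\<forall>t<n. 0 \<le> lo t \<and> lo t \<le> a t \<and> a t \<le> hi t" "s < n" "\<forall>t<n. a t \<le> a s" "0 < a s"
  defines "c \<equiv> \<lambda>t. if t = s then hi t else lo t"
  shows "\<forall>t<n. 0 \<le> c t" "\<forall>t<n. c t \<le> c s" "0 < c s" "\<forall>t<n. c t / c s \<le> a t / a s"
proof -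
  have hs: "a s \<le> hi s" "c s = hi s" using assms(1,2) unfolding c_def by auto
  have "0 \<le> c t \<and> c t \<le> c s" if "t < n" for t
  proof -
    have "0 \<le> lo t" "lo t \<le> a t" "a t \<le> a s" "a t \<le> hi t" using assms(1,3) that by auto
    then show ?thesis using hs unfolding c_def by auto
  qed
  then show "\<forall>t<n. 0 \<le> c t" "\<forall>t<n. c t \<le> c s" by auto
  show "0 < c s" using assms(4) hs by simp
  show "\<forall>t<n. c t / c s \<le> a t / a s"
  proof (intro allI impI)
    fix t assume t: "t < n"
    show "c t / c s \<le> a t / a s"
    proof (cases "t = s")
      case True
      then show ?thesis using assms(4) hs by simp
    next
      case False
      have "c t / c s \<le> a t / c s" using assms(1,4) t False hs unfolding c_def
        by (intro divide_right_mono) auto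
      also have "\<dots> \<le> a t / a s" using assms(1,4) t hs by (intro divide_left_mono) auto
      finally show ?thesis .
    qed
  qed
qed

lemma Attr_IC_of_Attr_Ak:
  assumes "0 < n" "\<forall>t<n. is_interval_lh (lo t) (hi t) (I t)" "nonneg_vec n x"
    "\<forall>k<n. x \<in> Attr n (Ak n lo hi k)" "A \<in> IC n I"
  shows "x \<in> Attr n A"
proof -
  obtain a where A: "A = Circ n a" and a_I: "\<forall>t<n. a t \<in> I t" using assms(5) unfolding IC_def by blast
  have box: "\<forall>t<n. 0 \<le> lo t \<and> lo t \<le> a t \<and> a t \<le> hi t"
  proof (intro allI impI)
    fix t assume "t < n"
    then have "a t \<in> {lo t..hi t}" "0 \<le> lo t"
      using a_I assms(2) is_interval_lh_closure(1,2)[of "lo t" "hi t" "I t"] by auto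
    then show "0 \<le> lo t \<and> lo t \<le> a t \<and> a t \<le> hi t" by simp
  qed
  then have a: "\<forall>t<n. 0 \<le> a t" by force
  obtain s where s: "s < n" "\<forall>t<n. a t \<le> a s" using ex_argmax_lessThan[OF assms(1)] .
  show ?thesis
  proof (cases "a s = 0")
    case True
    then show ?thesis unfolding A using Attr_Circ_zero[OF assms(1) _ assms(3)] a s(2) by (simp add: order.antisym)
  next
    case False
    then have "0 < a s" using a s(1) by (simp add: order.not_eq_order_implies_strict)
    note c = vertex_coeffs_dominated[OF box s this]
    have "x \<in> Attr n (Circ n (\<lambda>t. if t = s then hi t else lo t))"
      using assms(4) s(1) unfolding Ak_def by blast
    then show ?thesis unfolding A
      by (rule Attr_Circ_dominated[OF assms(1) c(1) a s(1) c(2) s(2) c(3) \<open>0 < a s\<close> c(4) assms(3)])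
  qed
qed

theorem corollary4:
  fixes n :: nat and lo hi :: "nat \<Rightarrow> real" and I :: "nat \<Rightarrow> real set"
    and x :: "nat \<Rightarrow> real"
  assumes "1 \<le> n"
    and "\<forall>t<n. is_interval_lh (lo t) (hi t) (I t)"
    and "nonneg_vec n x"
  shows "(\<forall>A\<in>IC n I. x \<in> Attr n A) \<longleftrightarrow> (\<forall>k<n. x \<in> Attr n (Ak n lo hi k))"
proof -
  have "0 < n" using assms(1) by simp
  then show ?thesis using Attr_Ak_of_Attr_IC Attr_IC_of_Attr_Ak assms(2,3) by blast
qed

end
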